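(* Let $(X,\beta,m)$ be a non-atomic standard probability space and $\tau$ an ergodic invertible measure-preserving map of $X$. Let $(\epsilon_n)_{n\ge1}$ be a sequence with $0<\epsilon_n<1/2$ for all $n$ and $\epsilon_n$ decreasing to $0$. Then there exists $E\in\beta$ with $m(E)>0$ such that $$m\Big(\bigcup_{k=1}^n\tau^k(E)\Big)\le1-\epsilon_n\quad\text{for all }n\ge1.$$ *)

theory Defs
  imports "HOL-Probability.Probability"
begin

definition standard_prob_space :: "('a::polish_space) measure \<Rightarrow> bool" where
  "standard_prob_space M \<longleftrightarrow> prob_space M \<and> sets M = sets borel"

definition non_atomic :: "'a measure \<Rightarrow> bool" where
  "non_atomic M \<longleftrightarrow> (\<forall>A\<in>sets M. measure M A > 0 \<longrightarrow>
      (\<exists>B\<in>sets M. B \<subseteq> A \<and> 0 < measure M B \<and> measure M B < measure M A))"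

definition measure_preserving :: "'a measure \<Rightarrow> ('a \<Rightarrow> 'a) \<Rightarrow> bool" where
  "measure_preserving M T \<longleftrightarrow> T \<in> measurable M M \<and>
      (\<forall>A\<in>sets M. emeasure M (T -` A \<inter> space M) = emeasure M A)"

definition invertible_mpt :: "'a measure \<Rightarrow> ('a \<Rightarrow> 'a) \<Rightarrow> bool" where
  "invertible_mpt M T \<longleftrightarrow> bij_betw T (space M) (space M) \<and> measure_preserving M T \<and>
      measure_preserving M (the_inv_into (space M) T)"

definition ergodic :: "'a measure \<Rightarrow> ('a \<Rightarrow> 'a) \<Rightarrow> bool" where
  "ergodic M T \<longleftrightarrow> (\<forall>A\<in>sets M. T -` A \<inter> space M = A \<longrightarrow>
      measure M A = 0 \<or> measure M A = 1)"

end

theory Submission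
  imports Defs
begin

text \<open>Pass to \<open>\<sigma> = \<tau>\<inverse>\<close>: the complement of \<open>\<Union>k\<le>n. \<tau>\<^sup>k E\<close> is \<open>\<Inter>k\<le>n. \<sigma>\<^sup>-\<^sup>k C\<close> for the complement \<open>C\<close>
  of \<open>E\<close>, so one needs a set \<open>C\<close> of measure less than \<open>1\<close> whose first \<open>n\<close> preimages still share
  measure \<open>\<epsilon>\<^sub>n\<close>. For a small set \<open>A\<close>, the set of points whose first \<open>m\<close> iterates avoid \<open>A\<close>
  shrinks from the whole space to a null set (by ergodicity) in steps of at most \<open>m(A)\<close>; stopping at
  the right moment yields, for any \<open>a < 1\<close> and \<open>L\<close>, a set of measure about \<open>a\<close> whose first
  \<open>L\<close> preimages share measure \<open>a\<close>. Doing this at the scales \<open>\<epsilon>\<^sub>1 2\<^sup>-\<^sup>j\<close>, with \<open>L\<close> so large that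
  \<open>\<epsilon>\<^sub>n\<close> has meanwhile dropped below the next scale, and taking the union gives \<open>C\<close> of measure
  at most about \<open>2 \<epsilon>\<^sub>1 < 1\<close>.\<close>

lemma (in prob_space) non_atomic_exists_small_set:
  assumes "non_atomic M" and "0 < \<eta>"
  shows "\<exists>A\<in>sets M. 0 < measure M A \<and> measure M A < \<eta>"
proof -
  have "\<exists>A\<in>sets M. 0 < measure M A \<and> measure M A \<le> (1/2::real) ^ k" for k
  proof (induction k)
    case 0
    show ?case using prob_space by (intro bexI[of _ "space M"]) auto
  next
    case (Suc k)
    then obtain A where A: "A \<in> sets M" "0 < measure M A" "measure M A \<le> (1/2::real) ^ k"
      by blast
    then obtain B where B: "B \<in> sets M" "B \<subseteq> A" "0 < measure M B" "measure M B < measure M A"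
      using \<open>non_atomic M\<close> unfolding non_atomic_def by blast
    have "measure M (A - B) = measure M A - measure M B"
      using finite_measure_Diff A B by simp
    \<comment> \<open>one of the two halves \<open>B\<close>, \<open>A - B\<close> has at most half the measure of \<open>A\<close>\<close>
    then show ?case
      using A B by (cases "measure M B \<le> measure M A / 2") (auto intro: bexI[of _ B] bexI[of _ "A - B"])
  qed
  moreover obtain k where "(1/2::real) ^ k < \<eta>"
    using real_arch_pow_inv[of \<eta> "1/2"] \<open>0 < \<eta>\<close> by auto
  ultimately show ?thesis by (meson le_less_trans)
qed

lemma image_funpow_eq_vimage_funpow:
  fixes f g :: "'a \<Rightarrow> 'a"
  assumes "\<And>x. g (f x) = x" and "\<And>y. f (g y) = y"
  shows "(f ^^ k) ` X = (g ^^ k) -` X"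
proof (induction k)
  case (Suc k)
  have inv: "f ` Y = g -` Y" for Y
    using assms by (auto simp: image_iff) (metis)
  have "(f ^^ Suc k) ` X = f ` (f ^^ k) ` X" by (simp add: image_comp)
  also have "\<dots> = g -` (g ^^ k) -` X" using Suc inv by simp
  also have "\<dots> = (g ^^ Suc k) -` X" by (simp only: funpow_Suc_right vimage_comp)
  finally show ?case .
qed simp

lemma exists_dyadic_scale:
  fixes x c :: real and N :: "nat \<Rightarrow> nat"
  assumes "0 < x" and "x \<le> c" and "\<And>j. N j \<le> n \<Longrightarrow> x < c * (1/2) ^ Suc j"
  shows "\<exists>j. n < N j \<and> x \<le> c * (1/2) ^ j"
proof (rule ccontr)
  assume none: "\<not> ?thesis"
  have below: "x \<le> c * (1/2) ^ j" for j
  proof (induction j)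
    case (Suc j)
    then have "N j \<le> n" using none by (meson not_le)
    then show ?case using assms(3) by (simp add: less_imp_le)
  qed (simp add: assms(2))
  obtain j where "(1/2::real) ^ j < x / c"
    using real_arch_pow_inv[of "x / c" "1/2"] assms(1,2) by auto
  then have "c * (1/2) ^ j < x" using assms(1,2) by (simp add: field_simps)
  with below show False by (meson not_le)
qed

locale ergodic_nonatomic_system = prob_space M for M :: "'a measure" +
  fixes T :: "'a \<Rightarrow> 'a"
  assumes space_eq_UNIV: "space M = UNIV"
    and measure_preserving: "measure_preserving M T"
    and ergodic: "ergodic M T"
    and non_atomic: "non_atomic M"
begin

lemma measurable_funpow: "T ^^ n \<in> measurable M M"
  using measure_preserving unfolding measure_preserving_def
  by (induction n) (auto intro: measurable_compose)

lemma sets_vimage_funpow: "B \<in> sets M \<Longrightarrow> (T ^^ n) -` B \<in> sets M"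
  using measurable_sets[OF measurable_funpow] space_eq_UNIV by simp

lemma measure_vimage: "B \<in> sets M \<Longrightarrow> measure M (T -` B) = measure M B"
  using measure_preserving space_eq_UNIV unfolding measure_preserving_def measure_def by simp

lemma measure_vimage_funpow:
  assumes "B \<in> sets M"
  shows "measure M ((T ^^ n) -` B) = measure M B"
  using assms
proof (induction n arbitrary: B)
  case (Suc n)
  have "(T ^^ Suc n) -` B = T -` ((T ^^ n) -` B)"
    by (simp only: funpow_Suc_right vimage_comp)
  then show ?case
    using Suc measure_vimage sets_vimage_funpow[of B n] by (simp del: funpow.simps)
qed simp

lemma sets_INT_finite:
  "finite I \<Longrightarrow> (\<And>i. i \<in> I \<Longrightarrow> X i \<in> sets M) \<Longrightarrow> (\<Inter>i\<in>I. X i) \<in> sets M"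
  using sets.finite_INT[of I X] space_eq_UNIV by (cases "I = {}") (use sets.top[of M] in auto)

lemma measure_eq_0_if_disjoint_vimages:
  assumes B: "B \<in> sets M" and disj: "disjoint_family (\<lambda>n. (T ^^ n) -` B)"
  shows "measure M B = 0"
proof (rule ccontr)
  assume "measure M B \<noteq> 0"
  then have pos: "0 < measure M B" using measure_nonneg by (metis less_eq_real_def)
  obtain K :: nat where K: "1 / measure M B < real K" using reals_Archimedean2 by blast
  have "measure M (\<Union>n<K. (T ^^ n) -` B) = (\<Sum>n<K. measure M ((T ^^ n) -` B))"
    using B disj by (intro finite_measure_finite_Union)
      (auto intro: sets_vimage_funpow disjoint_family_on_mono[of _ UNIV])
  also have "\<dots> = real K * measure M B" using B by (simp add: measure_vimage_funpow)
  also have "\<dots> > 1" using K pos by (simp add: field_simps)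
  finally show False by (meson leD prob_le_1)
qed

lemma forward_invariant_measure_0_or_1:
  assumes W: "W \<in> sets M" and forward: "W \<subseteq> T -` W"
  shows "measure M W = 0 \<or> measure M W = 1"
proof -
  define Y where "Y = (\<Union>n. (T ^^ n) -` W)"
  have "T -` Y = Y"
  proof
    show "T -` Y \<subseteq> Y"
    proof
      fix x assume "x \<in> T -` Y"
      then obtain n where "(T ^^ n) (T x) \<in> W" unfolding Y_def by auto
      then have "(T ^^ Suc n) x \<in> W" by (simp add: funpow_swap1)
      then show "x \<in> Y" unfolding Y_def by blast
    qed
    show "Y \<subseteq> T -` Y"
      unfolding Y_def using forward by (fastforce simp flip: funpow_swap1)
  qed
  moreover have "Y \<in> sets M" unfolding Y_def using W sets_vimage_funpow by auto
  moreover have "measure M Y = measure M W"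
  proof -
    have "incseq (\<lambda>n. (T ^^ n) -` W)" using forward by (intro incseq_SucI) auto
    then have "(\<lambda>n. measure M ((T ^^ n) -` W)) \<longlonglongrightarrow> measure M Y"
      unfolding Y_def using W sets_vimage_funpow by (intro finite_Lim_measure_incseq) auto
    then show ?thesis using W measure_vimage_funpow by (simp add: LIMSEQ_const_iff)
  qed
  ultimately show ?thesis using ergodic space_eq_UNIV unfolding ergodic_def by auto
qed

lemma almost_all_points_visit:
  assumes A: "A \<in> sets M" and pos: "0 < measure M A"
  shows "measure M {x. \<forall>i. (T ^^ Suc i) x \<notin> A} = 0"
proof -
  define W where "W = {x. \<forall>i. (T ^^ Suc i) x \<notin> A}"
  have "W = space M - (\<Union>i. (T ^^ Suc i) -` A)" unfolding W_def space_eq_UNIV by auto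
  then have W: "W \<in> sets M"
    using A by (auto intro!: sets.Diff sets.countable_UN sets_vimage_funpow simp del: funpow.simps)
  have forward: "W \<subseteq> T -` W"
  proof
    fix x assume "x \<in> W"
    then have "(T ^^ Suc (Suc i)) x \<notin> A" for i unfolding W_def by blast
    then show "x \<in> T -` W" unfolding W_def by (simp add: funpow_Suc_right del: funpow.simps)
  qed
  \<comment> \<open>a point of \<open>A \<inter> W\<close> never returns to \<open>A \<inter> W\<close>, so \<open>A \<inter> W\<close> is wandering\<close>
  have "(T ^^ n) -` (A \<inter> W) \<inter> (T ^^ m) -` (A \<inter> W) = {}" if "n < m" for n m
  proof -
    have "(T ^^ m) x = (T ^^ Suc (m - n - 1)) ((T ^^ n) x)" for x
    proof -
      have "m = Suc (m - n - 1) + n" using that by simp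
      then show ?thesis by (metis funpow_add comp_apply)
    qed
    then show ?thesis unfolding W_def by (auto simp del: funpow.simps)
  qed
  then have "disjoint_family (\<lambda>n. (T ^^ n) -` (A \<inter> W))"
    unfolding disjoint_family_on_def by (metis Int_commute linorder_neqE_nat)
  then have AW: "measure M (A \<inter> W) = 0"
    using A W by (intro measure_eq_0_if_disjoint_vimages) auto
  have "measure M W \<noteq> 1"
  proof
    assume "measure M W = 1"
    then have "measure M (A - W) = 0"
      using A W sets.compl_sets[OF W] prob_compl[of W] space_eq_UNIV
        finite_measure_mono[of "A - W" "space M - W"]
      by (auto simp: measure_le_0_iff)
    then show False
      using A W AW pos finite_measure_Union[of "A \<inter> W" "A - W"] by (auto simp: Int_Diff_Un)
  qed
  then show ?thesis
    unfolding W_def[symmetric] using forward_invariant_measure_0_or_1[OF W forward] by simp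
qed

definition avoiding :: "'a set \<Rightarrow> nat \<Rightarrow> 'a set" where
  "avoiding A m = {x. \<forall>i<m. (T ^^ Suc i) x \<notin> A}"

lemma sets_avoiding: "A \<in> sets M \<Longrightarrow> avoiding A m \<in> sets M"
proof -
  assume "A \<in> sets M"
  moreover have "avoiding A m = space M - (\<Union>i<m. (T ^^ Suc i) -` A)"
    unfolding avoiding_def space_eq_UNIV by auto
  ultimately show ?thesis by (auto intro!: sets.Diff sets_vimage_funpow simp del: funpow.simps)
qed

lemma avoiding_antimono: "m \<le> m' \<Longrightarrow> avoiding A m' \<subseteq> avoiding A m"
  unfolding avoiding_def by auto

lemma measure_avoiding_le:
  assumes A: "A \<in> sets M"
  shows "measure M (avoiding A m) \<le> measure M (avoiding A (m + k)) + real k * measure M A"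
proof (induction k)
  case (Suc k)
  have "avoiding A (m + k) \<subseteq> avoiding A (m + Suc k) \<union> (T ^^ Suc (m + k)) -` A"
    unfolding avoiding_def by (auto simp: less_Suc_eq simp del: funpow.simps)
  then have "measure M (avoiding A (m + k))
      \<le> measure M (avoiding A (m + Suc k) \<union> (T ^^ Suc (m + k)) -` A)"
    using A sets_avoiding sets_vimage_funpow by (intro finite_measure_mono sets.Un)
  also have "\<dots> \<le> measure M (avoiding A (m + Suc k)) + measure M ((T ^^ Suc (m + k)) -` A)"
    using A sets_avoiding sets_vimage_funpow
    by (intro measure_subadditive) (auto simp del: funpow.simps)
  finally show ?case
    using Suc A by (simp add: measure_vimage_funpow algebra_simps del: funpow.simps)
qed simp

lemma avoiding_add_subset_INT:
  "avoiding A (m + L) \<subseteq> (\<Inter>j\<in>{1..L}. (T ^^ j) -` avoiding A m)"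
proof (intro subsetI INT_I vimageI2)
  fix x j assume x: "x \<in> avoiding A (m + L)" and j: "j \<in> {1..L}"
  have "(T ^^ Suc i) ((T ^^ j) x) = (T ^^ Suc (i + j)) x" for i by (simp add: funpow_add)
  with x j show "(T ^^ j) x \<in> avoiding A m"
    unfolding avoiding_def by (auto simp del: funpow.simps)
qed

lemma measure_avoiding_tendsto_0:
  assumes A: "A \<in> sets M" and pos: "0 < measure M A"
  shows "(\<lambda>m. measure M (avoiding A m)) \<longlonglongrightarrow> 0"
proof -
  have "(\<Inter>m. avoiding A m) = {x. \<forall>i. (T ^^ Suc i) x \<notin> A}"
    unfolding avoiding_def by blast
  moreover have "(\<lambda>m. measure M (avoiding A m)) \<longlonglongrightarrow> measure M (\<Inter>m. avoiding A m)"
    using A sets_avoiding avoiding_antimono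
    by (intro finite_Lim_measure_decseq) (auto simp: decseq_def)
  ultimately show ?thesis using almost_all_points_visit[OF A pos] by simp
qed

lemma exists_set_measure_le_INT_vimage_ge:
  assumes a: "0 < a" "a < 1" and \<delta>: "0 < \<delta>"
  shows "\<exists>C\<in>sets M. measure M C \<le> a + \<delta> \<and> a \<le> measure M (\<Inter>j\<in>{1..L}. (T ^^ j) -` C)"
proof -
  define \<eta> where "\<eta> = min \<delta> (1 - a) / (real L + 1)"
  have \<eta>: "0 < \<eta>" "(real L + 1) * \<eta> \<le> min \<delta> (1 - a)"
    unfolding \<eta>_def using a \<delta> by auto
  obtain A where A: "A \<in> sets M" "0 < measure M A" "measure M A < \<eta>"
    using non_atomic_exists_small_set[OF non_atomic \<eta>(1)] by blast
  define G where "G m = measure M (avoiding A m)" for m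
  \<comment> \<open>\<open>G\<close> falls from \<open>1\<close> to \<open>0\<close> in steps smaller than \<open>\<eta>\<close>, so it can be stopped just above \<open>a\<close>\<close>
  have G_antimono: "G m' \<le> G m" if "m \<le> m'" for m m'
    unfolding G_def using A(1) that by (intro finite_measure_mono avoiding_antimono sets_avoiding)
  have G_step: "G m \<le> G (m + k) + real k * \<eta>" for m k
  proof -
    have "real k * measure M A \<le> real k * \<eta>" using A(3) by (intro mult_left_mono) auto
    then show ?thesis using measure_avoiding_le[OF A(1), of m k] unfolding G_def by linarith
  qed
  have "G \<longlonglongrightarrow> 0" unfolding G_def using measure_avoiding_tendsto_0[OF A(1,2)] by simp
  then have "eventually (\<lambda>m. G m < a) sequentially" using a(1) by (rule order_tendstoD(2))
  then obtain N where "G N < a" by (auto simp: eventually_sequentially)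
  define m1 where "m1 = (LEAST m. G m < a)"
  have m1: "G m1 < a" unfolding m1_def by (rule LeastI[of _ N]) fact
  have "G 0 = 1" unfolding G_def avoiding_def using prob_space space_eq_UNIV by simp
  then have "a \<le> G L" using G_step[of 0 L] \<eta> by (simp add: algebra_simps)
  have "L < m1"
  proof (rule ccontr)
    assume "\<not> L < m1"
    then have "G L \<le> G m1" by (intro G_antimono) simp
    with m1 \<open>a \<le> G L\<close> show False by simp
  qed
  then obtain m0 where m0: "m1 = m0 + Suc L" by (metis add.commute add_Suc_right less_natE)
  show ?thesis
  proof (intro bexI conjI)
    show "avoiding A m0 \<in> sets M" using A(1) by (rule sets_avoiding)
    have "G m0 \<le> a + real (Suc L) * \<eta>" using G_step[of m0 "Suc L"] m0 m1 by simp
    also have "\<dots> \<le> a + \<delta>" using \<eta>(2) by (simp add: algebra_simps)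
    finally show "measure M (avoiding A m0) \<le> a + \<delta>" unfolding G_def .
    have "a \<le> G (m0 + L)"
      using m0 not_less_Least[of "m0 + L" "\<lambda>m. G m < a"] unfolding m1_def by simp
    also have "\<dots> \<le> measure M (\<Inter>j\<in>{1..L}. (T ^^ j) -` avoiding A m0)"
      unfolding G_def using A(1)
      by (intro finite_measure_mono[OF avoiding_add_subset_INT] sets_INT_finite
          sets_vimage_funpow sets_avoiding) auto
    finally show "a \<le> measure M (\<Inter>j\<in>{1..L}. (T ^^ j) -` avoiding A m0)" .
  qed
qed

lemma exists_set_INT_vimage_ge:
  fixes \<epsilon> :: "nat \<Rightarrow> real" and c :: real
  assumes c: "c < 1/2" and \<epsilon>: "\<And>n. n \<ge> 1 \<Longrightarrow> 0 < \<epsilon> n \<and> \<epsilon> n \<le> c"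
    and lim: "\<epsilon> \<longlonglongrightarrow> 0"
  shows "\<exists>C\<in>sets M. measure M C < 1 \<and>
    (\<forall>n\<ge>1. \<epsilon> n \<le> measure M (\<Inter>j\<in>{1..n}. (T ^^ j) -` C))"
proof -
  have "0 < c" using \<epsilon>[of 1] by simp
  define \<delta> where "\<delta> = (1 - 2 * c) / 4"
  have "0 < \<delta>" unfolding \<delta>_def using c by simp
  have "\<exists>N C. (\<forall>n\<ge>N. \<epsilon> n < c * (1/2) ^ Suc j) \<and> C \<in> sets M \<and>
      measure M C \<le> (c + \<delta>) * (1/2) ^ j \<and> c * (1/2) ^ j \<le> measure M (\<Inter>k\<in>{1..N}. (T ^^ k) -` C)"
    for j
  proof -
    have "eventually (\<lambda>n. \<epsilon> n < c * (1/2) ^ Suc j) sequentially"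
      using lim \<open>0 < c\<close> by (intro order_tendstoD(2)) auto
    then obtain N where N: "\<forall>n\<ge>N. \<epsilon> n < c * (1/2) ^ Suc j"
      by (auto simp: eventually_sequentially)
    have "c * (1/2) ^ j \<le> c" using \<open>0 < c\<close> by (simp add: mult_left_le power_le_one)
    then have "c * (1/2) ^ j < 1" using c by linarith
    then obtain C where "C \<in> sets M" "measure M C \<le> c * (1/2) ^ j + \<delta> * (1/2) ^ j"
      "c * (1/2) ^ j \<le> measure M (\<Inter>k\<in>{1..N}. (T ^^ k) -` C)"
      using exists_set_measure_le_INT_vimage_ge[of "c * (1/2) ^ j" "\<delta> * (1/2) ^ j" N]
        \<open>0 < c\<close> \<open>0 < \<delta>\<close> by auto
    with N show ?thesis by (auto simp: distrib_right)
  qed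
  then obtain N C where N: "\<And>j n. N j \<le> n \<Longrightarrow> \<epsilon> n < c * (1/2) ^ Suc j"
    and C: "\<And>j. C j \<in> sets M" "\<And>j. measure M (C j) \<le> (c + \<delta>) * (1/2) ^ j"
      "\<And>j. c * (1/2) ^ j \<le> measure M (\<Inter>k\<in>{1..N j}. (T ^^ k) -` C j)"
    by metis
  show ?thesis
  proof (intro bexI conjI allI impI)
    show "(\<Union>j. C j) \<in> sets M" using C(1) by auto
    have geometric: "(\<lambda>j. (c + \<delta>) * (1/2) ^ j) sums ((c + \<delta>) * 2)"
      using sums_mult[OF geometric_sums[of "1/2::real"], of "c + \<delta>"] by simp
    then have summable: "summable (\<lambda>j. measure M (C j))"
      by (rule summable_comparison_test'[OF sums_summable, where N=0]) (simp add: C(2))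
    then have "measure M (\<Union>j. C j) \<le> (\<Sum>j. measure M (C j))"
      using C(1) by (intro finite_measure_subadditive_countably) auto
    also have "\<dots> \<le> (c + \<delta>) * 2"
      using suminf_le[OF C(2) summable sums_summable[OF geometric]] sums_unique[OF geometric]
      by simp
    also have "\<dots> < 1" unfolding \<delta>_def using c by (simp add: field_simps)
    finally show "measure M (\<Union>j. C j) < 1" .
    fix n :: nat assume "n \<ge> 1"
    then obtain j where j: "n < N j" "\<epsilon> n \<le> c * (1/2) ^ j"
      using exists_dyadic_scale[of "\<epsilon> n" c N n] \<epsilon> N by blast
    have "(\<Inter>k\<in>{1..N j}. (T ^^ k) -` C j) \<subseteq> (\<Inter>k\<in>{1..n}. (T ^^ k) -` (\<Union>j. C j))"
      using j(1) by (intro INT_anti_mono vimage_mono) auto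
    then have "measure M (\<Inter>k\<in>{1..N j}. (T ^^ k) -` C j)
        \<le> measure M (\<Inter>k\<in>{1..n}. (T ^^ k) -` (\<Union>j. C j))"
      using C(1) by (intro finite_measure_mono sets_INT_finite sets_vimage_funpow) auto
    then show "\<epsilon> n \<le> measure M (\<Inter>k\<in>{1..n}. (T ^^ k) -` (\<Union>j. C j))"
      using j(2) C(3)[of j] by linarith
  qed
qed

end

lemma vimage_eq_self_if_inverse:
  assumes "\<And>x. g (f x) = x" and "g -` B = B"
  shows "f -` B = B"
proof -
  have "f -` (g -` B) = B" using assms(1) by auto
  with assms(2) show ?thesis by simp
qed

lemma ergodic_nonatomic_system_inverse:
  fixes M :: "('a::polish_space) measure"
  assumes "standard_prob_space M" and "non_atomic M" and "invertible_mpt M \<tau>" and "ergodic M \<tau>"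
  defines "\<sigma> \<equiv> the_inv_into (space M) \<tau>"
  shows "ergodic_nonatomic_system M \<sigma>"
    and "\<And>x. \<sigma> (\<tau> x) = x" and "\<And>y. \<tau> (\<sigma> y) = y"
proof -
  have space: "space M = UNIV"
    using assms(1) sets_eq_imp_space_eq unfolding standard_prob_space_def by force
  have bij: "bij_betw \<tau> UNIV UNIV"
    using assms(3) space unfolding invertible_mpt_def by simp
  show \<sigma>\<tau>: "\<sigma> (\<tau> x) = x" for x
    unfolding \<sigma>_def space using bij by (simp add: bij_betw_def the_inv_into_f_f)
  show "\<tau> (\<sigma> y) = y" for y
    unfolding \<sigma>_def space using bij by (simp add: f_the_inv_into_f_bij_betw)
  have "ergodic M \<sigma>"
    using assms(4) vimage_eq_self_if_inverse[of \<sigma> \<tau>, OF \<sigma>\<tau>] space unfolding ergodic_def by simp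
  then show "ergodic_nonatomic_system M \<sigma>"
    using assms(1-3) space unfolding ergodic_nonatomic_system_def ergodic_nonatomic_system_axioms_def
      standard_prob_space_def invertible_mpt_def \<sigma>_def by simp
qed

theorem mainTheorem7:
  fixes M :: "('a::polish_space) measure" and \<tau> :: "'a \<Rightarrow> 'a" and \<epsilon> :: "nat \<Rightarrow> real"
  assumes "standard_prob_space M" and "non_atomic M"
    and "invertible_mpt M \<tau>" and "ergodic M \<tau>"
    and "\<And>n. n \<ge> 1 \<Longrightarrow> 0 < \<epsilon> n \<and> \<epsilon> n < 1/2"
    and "\<And>n. n \<ge> 1 \<Longrightarrow> \<epsilon> (Suc n) \<le> \<epsilon> n"
    and "\<epsilon> \<longlonglongrightarrow> 0"
  shows "\<exists>E\<in>sets M. measure M E > 0 \<and>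
           (\<forall>n\<ge>1. measure M (\<Union>k\<in>{1..n}. (\<tau> ^^ k) ` E) \<le> 1 - \<epsilon> n)"
proof -
  define \<sigma> where "\<sigma> = the_inv_into (space M) \<tau>"
  interpret ergodic_nonatomic_system M \<sigma>
    using ergodic_nonatomic_system_inverse(1)[OF assms(1-4)] unfolding \<sigma>_def .
  have "\<epsilon> n \<le> \<epsilon> 1" if "n \<ge> 1" for n
    using that by (induction n rule: dec_induct) (auto intro: order_trans[OF assms(6)])
  then obtain C where C: "C \<in> sets M" "measure M C < 1"
    and C_INT: "\<And>n. n \<ge> 1 \<Longrightarrow> \<epsilon> n \<le> measure M (\<Inter>j\<in>{1..n}. (\<sigma> ^^ j) -` C)"
    using exists_set_INT_vimage_ge[of "\<epsilon> 1" \<epsilon>] assms(5,7) by auto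
  have image_eq: "(\<tau> ^^ k) ` (space M - C) = space M - (\<sigma> ^^ k) -` C" for k
    using image_funpow_eq_vimage_funpow[of \<sigma> \<tau> k]
      ergodic_nonatomic_system_inverse(2,3)[OF assms(1-4)]
    unfolding \<sigma>_def space_eq_UNIV by auto
  show ?thesis
  proof (intro bexI conjI allI impI)
    show "space M - C \<in> sets M" using C(1) by auto
    show "0 < measure M (space M - C)" using C by (simp add: prob_compl)
    fix n :: nat assume "n \<ge> 1"
    have "(\<Union>k\<in>{1..n}. (\<tau> ^^ k) ` (space M - C)) = space M - (\<Inter>j\<in>{1..n}. (\<sigma> ^^ j) -` C)"
      unfolding image_eq by auto
    then show "measure M (\<Union>k\<in>{1..n}. (\<tau> ^^ k) ` (space M - C)) \<le> 1 - \<epsilon> n"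
      using C(1) C_INT[OF \<open>n \<ge> 1\<close>]
      by (simp add: prob_compl sets_INT_finite sets_vimage_funpow)
  qed
qed

end
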